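(* Let $A$ be a valuation domain in which every non-zero prime ideal is branched, and let $E$ be an $A$-module. The following are equivalent: (1) $aE=a^2E$ for each $a\in A$; (2) for each prime ideal $L$ of $A$, $LE/L'E$ is a divisible $A/L'$-module, where $L'$ denotes the union of all prime ideals properly contained in $L$.
   Context: In a valuation domain, a non-zero prime ideal $L$ is branched if it is not the union of the prime ideals properly contained in it. An $A/L'$-module $M$ is divisible if $sM=M$ for every $s\in A\setminus L'$. *)

theory Defs
  imports Complex_Main
begin

text \<open>Ideals of a commutative ring, given as type-class algebra (the ring is the whole type).\<close>
definition is_ideal :: "'a::comm_ring_1 set \<Rightarrow> bool" where
  "is_ideal I \<longleftrightarrow> 0 \<in> I \<and> (\<forall>x\<in>I. \<forall>y\<in>I. x + y \<in> I) \<and> (\<forall>r. \<forall>x\<in>I. r * x \<in> I)"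

definition prime_ideal :: "'a::comm_ring_1 set \<Rightarrow> bool" where
  "prime_ideal P \<longleftrightarrow> is_ideal P \<and> P \<noteq> UNIV \<and> (\<forall>a b. a * b \<in> P \<longrightarrow> a \<in> P \<or> b \<in> P)"

definition valuation_domain :: "'a::idom itself \<Rightarrow> bool" where
  "valuation_domain _ \<longleftrightarrow> (\<forall>a b :: 'a. a dvd b \<or> b dvd a)"

definition lower_prime :: "'a::comm_ring_1 set \<Rightarrow> 'a set" where
  "lower_prime L = \<Union>{P. prime_ideal P \<and> P \<subset> L}"

definition branched :: "'a::comm_ring_1 set \<Rightarrow> bool" where
  "branched L \<longleftrightarrow> L \<noteq> lower_prime L"

definition ideal_times_module ::
  "('a::comm_ring_1 \<Rightarrow> 'b::ab_group_add \<Rightarrow> 'b) \<Rightarrow> 'a set \<Rightarrow> 'b set" where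
  "ideal_times_module scale I = module.span scale {scale i x | i x. i \<in> I}"

text \<open>The A/L'-module LE/L'E is divisible: s (LE/L'E) = LE/L'E for every s not in L'.
  Unfolded on representatives: every y in LE is congruent modulo L'E to s z with z in LE.\<close>
definition divisible_quotient ::
  "('a::comm_ring_1 \<Rightarrow> 'b::ab_group_add \<Rightarrow> 'b) \<Rightarrow> 'a set \<Rightarrow> bool" where
  "divisible_quotient scale L \<longleftrightarrow>
     (\<forall>s. s \<notin> lower_prime L \<longrightarrow>
        (\<forall>y \<in> ideal_times_module scale L. \<exists>z \<in> ideal_times_module scale L.
            scale s z - y \<in> ideal_times_module scale (lower_prime L)))"

end

theory Submission
  imports Defs
begin

text \<open>
  In a valuation domain the radical \<open>rad s = {b. s dvd b\<^sup>n for some n \<ge> 1}\<close> of a non-unit \<open>s\<close>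
  is the smallest prime ideal containing \<open>s\<close>, and for a prime \<open>L\<close> containing \<open>s\<close> one has
  \<open>s \<notin> L'\<close> exactly when \<open>L = rad s\<close>. Moreover every element outside a prime \<open>Q\<close> divides every
  element of \<open>Q\<close>.

  (1) \<open>\<Longrightarrow>\<close> (2): for \<open>s \<notin> L'\<close> we even get \<open>LE = s(LE)\<close>. A generator \<open>l x\<close> of \<open>LE\<close> lies in
  \<open>s(LE)\<close>: if \<open>s \<notin> L\<close> then \<open>s\<close> divides \<open>l\<close>; otherwise \<open>L = rad s\<close>, so \<open>s\<close> divides some
  \<open>l\<^sup>n\<close>, and \<open>l x \<in> l\<^sup>n\<^sup>+\<^sup>1E\<close> by (1).

  (2) \<open>\<Longrightarrow>\<close> (1): for a non-unit \<open>a\<close> put \<open>L = rad a\<close>. Then \<open>a \<notin> L'\<close>, hence \<open>a\<^sup>2\<close> divides every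
  element of \<open>L'\<close> and \<open>L'E \<subseteq> a\<^sup>2E\<close>. Dividing \<open>ax \<in> LE\<close> twice by \<open>a\<close> modulo \<open>L'E\<close> gives
  \<open>ax \<in> a\<^sup>2E\<close>.
\<close>

lemma valuation_domainD:
  fixes a b :: "'a::idom"
  assumes "valuation_domain TYPE('a)"
  shows "a dvd b \<or> b dvd a"
  using assms unfolding valuation_domain_def by blast

lemma is_ideal_dvd_mem:
  fixes x y :: "'a::comm_ring_1"
  assumes "is_ideal I" "x \<in> I" "x dvd y"
  shows "y \<in> I"
proof -
  obtain k where "y = x * k" using assms(3) by (auto elim: dvdE)
  then show ?thesis using assms(1,2) unfolding is_ideal_def by (metis mult.commute)
qed

lemma prime_ideal_power_mem:
  fixes b :: "'a::comm_ring_1"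
  assumes "prime_ideal L" "b ^ n \<in> L" "n \<ge> 1"
  shows "b \<in> L"
  using assms(2,3)
proof (induction n)
  case 0
  then show ?case by simp
next
  case (Suc n)
  show ?case
  proof (cases "n = 0")
    case True
    then show ?thesis using Suc.prems by simp
  next
    case False
    have "b \<in> L \<or> b ^ n \<in> L"
      using Suc.prems assms(1) unfolding prime_ideal_def by (metis power_Suc)
    then show ?thesis using Suc.IH False by auto
  qed
qed

lemma prime_ideal_not_unit:
  fixes s :: "'a::comm_ring_1"
  assumes "prime_ideal L" "s \<in> L"
  shows "\<not> s dvd 1"
  using assms is_ideal_dvd_mem[of L s] unfolding prime_ideal_def
  by (meson UNIV_I dvd_trans one_dvd subsetI subset_antisym)

lemma valuation_dvd_of_mem_prime:
  fixes b m :: "'a::idom"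
  assumes "valuation_domain TYPE('a)" "prime_ideal Q" "b \<notin> Q" "m \<in> Q"
  shows "b dvd m"
  using assms is_ideal_dvd_mem[of Q m b] valuation_domainD[of b m]
  unfolding prime_ideal_def by blast

definition principal_radical :: "'a::comm_ring_1 \<Rightarrow> 'a set" where
  "principal_radical s = {b. \<exists>n\<ge>1. s dvd b ^ n}"

lemma mem_principal_radical_self: "s \<in> principal_radical s"
  unfolding principal_radical_def by (auto intro: exI[of _ 1])

lemma principal_radical_subset_prime:
  assumes "prime_ideal Q" "s \<in> Q"
  shows "principal_radical s \<subseteq> Q"
  using assms prime_ideal_power_mem[OF assms(1)] is_ideal_dvd_mem[of Q s]
  unfolding principal_radical_def prime_ideal_def by blast

lemma principal_radical_add_mem:
  fixes b c :: "'a::comm_ring_1"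
  assumes "b \<in> principal_radical s" "b dvd c"
  shows "b + c \<in> principal_radical s"
proof -
  obtain n where n: "n \<ge> 1" "s dvd b ^ n"
    using assms(1) unfolding principal_radical_def by blast
  obtain d where "c = b * d" using assms(2) by (auto elim: dvdE)
  then have "(b + c) ^ n = b ^ n * (1 + d) ^ n"
    by (simp add: distrib_left flip: power_mult_distrib)
  then show ?thesis using n unfolding principal_radical_def by auto
qed

lemma principal_radical_mult_mem:
  fixes a b :: "'a::comm_ring_1"
  assumes "a * b \<in> principal_radical s" "a dvd b"
  shows "b \<in> principal_radical s"
proof -
  obtain n where n: "n \<ge> 1" "s dvd (a * b) ^ n"
    using assms(1) unfolding principal_radical_def by blast
  obtain c where "b = a * c" using assms(2) by (auto elim: dvdE)
  then have "(a * b) ^ n * c ^ n = b ^ n * b ^ n"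
    by (simp add: power_mult_distrib ac_simps)
  also have "\<dots> = b ^ (2 * n)"
    by (simp add: mult_2 power_add)
  finally have "s dvd b ^ (2 * n)" using n(2) by (metis dvd_mult2)
  then show ?thesis using n(1) unfolding principal_radical_def by (intro CollectI exI[of _ "2 * n"]) auto
qed

lemma prime_ideal_principal_radical:
  fixes s :: "'a::idom"
  assumes "valuation_domain TYPE('a)" "\<not> s dvd 1"
  shows "prime_ideal (principal_radical s)"
proof -
  have "is_ideal (principal_radical s)"
    unfolding is_ideal_def
  proof (intro conjI ballI allI)
    show "0 \<in> principal_radical s"
      unfolding principal_radical_def by (auto intro: exI[of _ 1])
    show "x + y \<in> principal_radical s"
      if "x \<in> principal_radical s" "y \<in> principal_radical s" for x y
      using that principal_radical_add_mem[of x s y] principal_radical_add_mem[of y s x]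
        valuation_domainD[OF assms(1), of x y] by (metis add.commute)
    show "r * x \<in> principal_radical s" if "x \<in> principal_radical s" for r x
      using that unfolding principal_radical_def by (auto simp: power_mult_distrib)
  qed
  moreover have "1 \<notin> principal_radical s"
    using assms(2) unfolding principal_radical_def by auto
  moreover have "a \<in> principal_radical s \<or> b \<in> principal_radical s"
    if "a * b \<in> principal_radical s" for a b
    using that principal_radical_mult_mem[of a b s] principal_radical_mult_mem[of b a s]
      valuation_domainD[OF assms(1), of a b] by (metis mult.commute)
  ultimately show ?thesis unfolding prime_ideal_def by blast
qed

lemma not_mem_lower_prime_iff_principal_radical_eq:
  fixes s :: "'a::idom"
  assumes "valuation_domain TYPE('a)" "prime_ideal L" "s \<in> L"
  shows "s \<notin> lower_prime L \<longleftrightarrow> principal_radical s = L"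
proof
  assume s: "s \<notin> lower_prime L"
  have rad: "prime_ideal (principal_radical s)" "principal_radical s \<subseteq> L"
    using prime_ideal_principal_radical[OF assms(1) prime_ideal_not_unit[OF assms(2,3)]]
      principal_radical_subset_prime[OF assms(2,3)] by auto
  show "principal_radical s = L"
  proof (rule ccontr)
    assume "principal_radical s \<noteq> L"
    then have "s \<in> lower_prime L"
      using rad mem_principal_radical_self[of s] unfolding lower_prime_def by blast
    then show False using s by contradiction
  qed
next
  assume "principal_radical s = L"
  then show "s \<notin> lower_prime L"
    using principal_radical_subset_prime[of _ s] unfolding lower_prime_def by blast
qed

context module
begin

lemma subspace_scale_image: "subspace S \<Longrightarrow> subspace (scale c ` S)"
  using module_hom.subspace_image[OF module_hom_scale_self] .

lemma scale_mem_ideal_times_module: "i \<in> I \<Longrightarrow> scale i x \<in> ideal_times_module scale I"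
  unfolding ideal_times_module_def by (auto intro!: span_base)

lemma range_scale_power_subset_range_scale: "range (scale (a ^ Suc k)) \<subseteq> range (scale a)"
  by (auto simp flip: scale_scale)

lemma range_scale_subset_range_scale_power:
  assumes "range (scale a) \<subseteq> range (scale (a ^ 2))"
  shows "range (scale a) \<subseteq> range (scale (a ^ Suc k))"
proof (induction k)
  case 0
  then show ?case by simp
next
  case (Suc k)
  show ?case
  proof
    fix y assume "y \<in> range (scale a)"
    then obtain x where x: "y = scale (a ^ k) (scale a x)"
      using Suc by (auto simp: mult.commute)
    obtain u where "scale a x = scale (a ^ 2) u" using assms by blast
    then have "y = scale (a ^ Suc (Suc k)) u"
      using x by (simp add: power2_eq_square algebra_simps)
    then show "y \<in> range (scale (a ^ Suc (Suc k)))" by blast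
  qed
qed

end

locale valuation_module = module scale for scale :: "'a::idom \<Rightarrow> 'b::ab_group_add \<Rightarrow> 'b" +
  assumes valuation: "valuation_domain TYPE('a)"
begin

lemma ideal_times_module_subset_scale_image:
  assumes "prime_ideal L" "s \<notin> lower_prime L"
    and square: "\<And>a. range (scale a) \<subseteq> range (scale (a ^ 2))"
  shows "ideal_times_module scale L \<subseteq> scale s ` ideal_times_module scale L"
  unfolding ideal_times_module_def
proof (rule span_minimal, clarify)
  let ?LE = "ideal_times_module scale L"
  show "subspace (scale s ` span {scale i x |i x. i \<in> L})"
    by (simp add: subspace_scale_image)
  fix l x assume l: "l \<in> L"
  show "scale l x \<in> scale s ` span {scale i x |i x. i \<in> L}"
  proof (cases "s \<in> L")
    case False
    then obtain t where t: "l = s * t"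
      using valuation_dvd_of_mem_prime[OF valuation assms(1) False l] by (auto elim: dvdE)
    then have "t \<in> L" using assms(1) l False unfolding prime_ideal_def by blast
    then have "scale t x \<in> ?LE" by (rule scale_mem_ideal_times_module)
    then show ?thesis using t unfolding ideal_times_module_def by (auto intro!: image_eqI)
  next
    case True
    then have "l \<in> principal_radical s"
      using l not_mem_lower_prime_iff_principal_radical_eq[OF valuation assms(1)] assms(2) by blast
    then obtain n where n: "n \<ge> 1" "s dvd l ^ n"
      unfolding principal_radical_def by blast
    then obtain c where c: "l ^ n = s * c" by (auto elim: dvdE)
    obtain x' where "scale l x = scale (l ^ Suc n) x'"
      using range_scale_subset_range_scale_power[OF square] by blast
    also have "\<dots> = scale s (scale c (scale l x'))"
      using c by (simp add: algebra_simps)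
    finally have "scale l x = scale s (scale c (scale l x'))" .
    moreover have "scale c (scale l x') \<in> ?LE"
      unfolding ideal_times_module_def using l by (intro span_scale span_base) blast
    ultimately show ?thesis
      unfolding ideal_times_module_def by blast
  qed
qed

lemma divisible_quotient_if_range_scale_square:
  assumes "prime_ideal L"
    and "\<And>a. range (scale a) \<subseteq> range (scale (a ^ 2))"
  shows "divisible_quotient scale L"
  unfolding divisible_quotient_def
proof (intro allI impI ballI)
  fix s y assume "s \<notin> lower_prime L" "y \<in> ideal_times_module scale L"
  then obtain z where "z \<in> ideal_times_module scale L" "y = scale s z"
    using ideal_times_module_subset_scale_image[OF assms(1) _ assms(2)] by blast
  then show "\<exists>z \<in> ideal_times_module scale L.
      scale s z - y \<in> ideal_times_module scale (lower_prime L)"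
    unfolding ideal_times_module_def by (intro bexI[of _ z]) (auto intro: span_zero)
qed

lemma lower_prime_times_module_subset_range_scale_square:
  assumes "a \<notin> lower_prime L"
  shows "ideal_times_module scale (lower_prime L) \<subseteq> range (scale (a ^ 2))"
  unfolding ideal_times_module_def
proof (rule span_minimal, clarify)
  show "subspace (range (scale (a ^ 2)))"
    by (simp add: subspace_scale_image)
  fix m u assume "m \<in> lower_prime L"
  then obtain Q where Q: "prime_ideal Q" "Q \<subset> L" "m \<in> Q"
    unfolding lower_prime_def by blast
  then have "a \<notin> Q"
    using assms unfolding lower_prime_def by blast
  then have "a ^ 2 \<notin> Q"
    using prime_ideal_power_mem[OF Q(1), of a 2] by auto
  then have "a ^ 2 dvd m"
    by (rule valuation_dvd_of_mem_prime[OF valuation Q(1) _ Q(3)])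
  then obtain t where "m = a ^ 2 * t" by (elim dvdE)
  then show "scale m u \<in> range (scale (a ^ 2))"
    by (metis rangeI scale_scale)
qed

lemma range_scale_subset_square_if_divisible_quotient:
  assumes divisible: "\<And>L. prime_ideal L \<Longrightarrow> divisible_quotient scale L"
  shows "range (scale a) \<subseteq> range (scale (a ^ 2))"
proof (cases "a dvd 1")
  case True
  then obtain b where b: "1 = a * b" by (auto elim: dvdE)
  have "scale a x = scale (a ^ 2) (scale b x)" for x
    by (simp add: power2_eq_square algebra_simps flip: b)
  then show ?thesis by blast
next
  case False
  define L where "L = principal_radical a"
  have L: "prime_ideal L" "a \<in> L"
    unfolding L_def using prime_ideal_principal_radical[OF valuation False]
    by (auto intro: mem_principal_radical_self)
  then have a: "a \<notin> lower_prime L"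
    by (subst not_mem_lower_prime_iff_principal_radical_eq[OF valuation L]) (simp add: L_def)
  let ?L'E = "ideal_times_module scale (lower_prime L)"
  have L'E: "?L'E \<subseteq> range (scale (a ^ 2))"
    by (rule lower_prime_times_module_subset_range_scale_square[OF a])
  have divide: "\<exists>z \<in> ideal_times_module scale L. \<exists>w. scale a z = y + scale (a ^ 2) w"
    if "y \<in> ideal_times_module scale L" for y
  proof -
    have "\<forall>y \<in> ideal_times_module scale L. \<exists>z \<in> ideal_times_module scale L. scale a z - y \<in> ?L'E"
      using divisible[OF L(1)] a unfolding divisible_quotient_def by simp
    from this[rule_format, OF that]
    obtain z where "z \<in> ideal_times_module scale L" "scale a z - y \<in> ?L'E"
      by blast
    moreover from this(2) obtain w where "scale a z - y = scale (a ^ 2) w"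
      using L'E by blast
    ultimately show ?thesis by (auto simp: diff_eq_eq add.commute)
  qed
  show ?thesis
  proof clarify
    fix x
    obtain z w1 where z: "z \<in> ideal_times_module scale L" "scale a z = scale a x + scale (a ^ 2) w1"
      using divide[OF scale_mem_ideal_times_module[OF L(2)]] by blast
    obtain z2 w2 where "scale a z2 = z + scale (a ^ 2) w2"
      using divide[OF z(1)] by blast
    then have "z = scale a z2 - scale (a ^ 2) w2" by simp
    then have "scale a z = scale (a ^ 2) z2 - scale (a ^ 2) (scale a w2)"
      by (simp add: scale_right_diff_distrib power2_eq_square ac_simps)
    then have "scale a x = scale (a ^ 2) (z2 - scale a w2 - w1)"
      using z(2) by (simp add: scale_right_diff_distrib eq_diff_eq)
    then show "scale a x \<in> range (scale (a ^ 2))" by blast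
  qed
qed

end

theorem proposition2p6:
  fixes scale :: "'a::idom \<Rightarrow> 'b::ab_group_add \<Rightarrow> 'b"
  assumes "valuation_domain TYPE('a)"
    and "\<And>L :: 'a set. prime_ideal L \<Longrightarrow> L \<noteq> {0} \<Longrightarrow> branched L"
    and "module scale"
  shows "(\<forall>a :: 'a. range (scale a) = range (scale (a ^ 2)))
     \<longleftrightarrow> (\<forall>L :: 'a set. prime_ideal L \<longrightarrow> divisible_quotient scale L)"
proof -
  interpret valuation_module scale
    using assms(1,3) by (simp add: valuation_module_def valuation_module_axioms_def)
  have square_le: "range (scale (a ^ 2)) \<subseteq> range (scale a)" for a
    using range_scale_power_subset_range_scale[of a 1] by (simp add: numeral_2_eq_2)
  show ?thesis
  proof
    assume "\<forall>a. range (scale a) = range (scale (a ^ 2))"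
    then have "range (scale a) \<subseteq> range (scale (a ^ 2))" for a
      by simp
    then show "\<forall>L. prime_ideal L \<longrightarrow> divisible_quotient scale L"
      using divisible_quotient_if_range_scale_square by simp
  next
    assume "\<forall>L. prime_ideal L \<longrightarrow> divisible_quotient scale L"
    then have "range (scale a) \<subseteq> range (scale (a ^ 2))" for a
      by (simp add: range_scale_subset_square_if_divisible_quotient)
    then show "\<forall>a. range (scale a) = range (scale (a ^ 2))"
      using square_le by (simp add: subset_antisym)
  qed
qed

end
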